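(* Let $r\ge2$, $n\ge2r$, and let $H\subseteq\binom{\Omega_n}{r}$ be $M_1^{(r)}$-saturated. Then there exist $\ell\ge1$ and distinct vertices $w_1,\dots,w_{2\ell+1}\in\Omega_n$ with $w_1<w_3<w_5<\dots<w_{2\ell+1}<w_2<w_4<\dots<w_{2\ell}<w_1$ (clockwise cyclic order) such that $\lambda(w_i)=w_{i+1}$ and $\rho(w_i)=w_{i-1}$ for all $i$, with indices taken mod $2\ell+1$.
   Context: $\Omega_n=\{v_0,\dots,v_{n-1}\}$ with cyclic order $v_0<\dots<v_{n-1}<v_0$, indices mod $n$. For distinct vertices $u,w$, $(u,w)$ is the set of vertices strictly between $u$ and $w$ moving clockwise from $u$ to $w$ and $[u,w]=(u,w)\cup\{u,w\}$. An $r$-cgh $H\subseteq\binom{\Omega_n}{r}$ is $M_1^{(r)}$-saturated if there are no edges $h_1,h_2\in H$ and vertices $u\neq u'$ with $h_1\subseteq[u,u']$ and $h_2\cap[u,u']=\emptyset$, but for every $e\in\binom{\Omega_n}{r}\setminus H$ such a pair exists in $H\cup\{e\}$. In such $H$ every vertex lies in an edge. $\lambda(v_i)$ is the vertex $u$ such that some $h\in H$ with $v_i\in h$ satisfies $h\subseteq[u,v_i]$, while no $h\in H$ with $v_i\in h$ satisfies $h\subseteq[u',v_i]$, $u'$ the clockwise successor of $u$. $\rho(v_i)$ is the vertex $u$ such that some $h\in H$ with $v_i\in h$ satisfies $h\subseteq[v_i,u]$ but none with $h\subseteq[v_i,u'']$, $u''$ the clockwise predecessor of $u$. *)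

theory Defs
  imports Main
begin

text \<open>Vertices of Omega_n are the naturals 0..n-1 (v_i = i), with the cyclic
order 0 < 1 < ... < n-1 < 0; all index arithmetic is mod n.\<close>

definition vsucc :: "nat \<Rightarrow> nat \<Rightarrow> nat" where
  "vsucc n u = (u + 1) mod n"

definition vpred :: "nat \<Rightarrow> nat \<Rightarrow> nat" where
  "vpred n u = (u + n - 1) mod n"

text \<open>Closed clockwise interval [u,w] (for u, w < n).\<close>
definition cint :: "nat \<Rightarrow> nat \<Rightarrow> nat \<Rightarrow> nat set" where
  "cint n u w = {x. x < n \<and> (x + n - u) mod n \<le> (w + n - u) mod n}"

definition r_sets :: "nat \<Rightarrow> nat \<Rightarrow> nat set set" where
  "r_sets n r = {e. e \<subseteq> {0..<n} \<and> card e = r}"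

definition has_M1 :: "nat \<Rightarrow> nat set set \<Rightarrow> bool" where
  "has_M1 n H = (\<exists>h1\<in>H. \<exists>h2\<in>H. \<exists>u<n. \<exists>u'<n. u \<noteq> u' \<and>
       h1 \<subseteq> cint n u u' \<and> h2 \<inter> cint n u u' = {})"

definition M1_saturated :: "nat \<Rightarrow> nat \<Rightarrow> nat set set \<Rightarrow> bool" where
  "M1_saturated n r H = (H \<subseteq> r_sets n r \<and> \<not> has_M1 n H \<and>
       (\<forall>e \<in> r_sets n r - H. has_M1 n (insert e H)))"

definition lam :: "nat \<Rightarrow> nat set set \<Rightarrow> nat \<Rightarrow> nat" where
  "lam n H v = (THE u. u < n \<and>
      (\<exists>h\<in>H. v \<in> h \<and> h \<subseteq> cint n u v) \<and>
      \<not> (\<exists>h\<in>H. v \<in> h \<and> h \<subseteq> cint n (vsucc n u) v))"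

definition rho :: "nat \<Rightarrow> nat set set \<Rightarrow> nat \<Rightarrow> nat" where
  "rho n H v = (THE u. u < n \<and>
      (\<exists>h\<in>H. v \<in> h \<and> h \<subseteq> cint n v u) \<and>
      \<not> (\<exists>h\<in>H. v \<in> h \<and> h \<subseteq> cint n v (vpred n u)))"

definition cyc_ordered :: "nat list \<Rightarrow> bool" where
  "cyc_ordered xs = (\<exists>k. sorted_wrt (<) (rotate k xs))"

end

theory Submission
  imports Defs
begin

(*
  Call (p, q) tight if some edge through p and q lies in the interval [q, p] while no edge lies
  in [q, p - 1] or in [q + 1, p]; then lam p = q and rho q = p.  A shortest interval containing
  an edge yields a tight pair.  Saturation extends every tight pair (p, q) to a tight pair (q, t)
  with t strictly inside the arc (p, q): the r-set made of p + 1, q and r - 2 vertices between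
  them must be an edge, and t is the farthest start of an interval ending at q that holds an edge
  through q.  Hence the lam-orbit w_0, w_1, ... of a tight pair consists of tight pairs with
  w_(i+2) inside the arc (w_i, w_(i+1)), and the absence of M_1 keeps every orbit point out of
  the arc (w_i, w_(i+2)).  Since rho inverts lam along the orbit, the orbit is purely periodic;
  if its period P were even, the closed walk w_0, w_2, ..., w_P = w_0 would pass over w_1.
  So P = 2l + 1, and w_0, w_2, w_4, ... lists the orbit in clockwise order.
*)

definition cdist :: "nat \<Rightarrow> nat \<Rightarrow> nat \<Rightarrow> nat" where
  "cdist n a b = (b + n - a) mod n"

lemma cdist_eq: "a < n \<Longrightarrow> b < n \<Longrightarrow> cdist n a b = (if a \<le> b then b - a else b + n - a)"
  unfolding cdist_def by (auto simp: mod_if)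

lemma cdist_less: "a < n \<Longrightarrow> cdist n a b < n"
  unfolding cdist_def by auto

lemma cdist_self[simp]: "cdist n a a = 0"
  unfolding cdist_def by auto

lemma cdist_eq_0_iff: "a < n \<Longrightarrow> b < n \<Longrightarrow> cdist n a b = 0 \<longleftrightarrow> a = b"
  by (auto simp: cdist_eq split: if_splits)

lemma cdist_right_inj: "a < n \<Longrightarrow> x < n \<Longrightarrow> y < n \<Longrightarrow> cdist n a x = cdist n a y \<Longrightarrow> x = y"
  by (auto simp: cdist_eq split: if_splits)

lemma cdist_left_inj: "a < n \<Longrightarrow> b < n \<Longrightarrow> p < n \<Longrightarrow> cdist n a p = cdist n b p \<Longrightarrow> a = b"
  by (auto simp: cdist_eq split: if_splits)

lemma cdist_add_mod: "a < n \<Longrightarrow> b < n \<Longrightarrow> c < n \<Longrightarrow> cdist n a c = (cdist n a b + cdist n b c) mod n"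
  by (auto simp: cdist_eq mod_if split: if_splits)

lemma cdist_add_swap: "a < n \<Longrightarrow> b < n \<Longrightarrow> a \<noteq> b \<Longrightarrow> cdist n a b + cdist n b a = n"
  by (auto simp: cdist_eq)

lemma cdist_add_mod_self: "a < n \<Longrightarrow> k < n \<Longrightarrow> cdist n a ((a + k) mod n) = k"
  by (auto simp: cdist_def mod_if)

lemma cdist_rebase_le: "a < n \<Longrightarrow> x < n \<Longrightarrow> y < n \<Longrightarrow> cdist n a x \<le> cdist n a y \<Longrightarrow>
    cdist n x y = cdist n a y - cdist n a x"
  by (auto simp: cdist_eq split: if_splits)

lemma cdist_rebase_gt: "a < n \<Longrightarrow> x < n \<Longrightarrow> y < n \<Longrightarrow> cdist n a x > cdist n a y \<Longrightarrow>
    cdist n x y = cdist n a y + n - cdist n a x"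
  by (auto simp: cdist_eq split: if_splits)

lemma vsucc_less: "a < n \<Longrightarrow> vsucc n a < n" unfolding vsucc_def by auto

lemma vpred_less: "a < n \<Longrightarrow> vpred n a < n" unfolding vpred_def by auto

lemma vsucc_eq: "a < n \<Longrightarrow> vsucc n a = (if a + 1 = n then 0 else a + 1)"
  unfolding vsucc_def by auto

lemma vpred_eq: "a < n \<Longrightarrow> vpred n a = (if a = 0 then n - 1 else a - 1)"
  unfolding vpred_def by (auto simp: mod_if)

lemma vsucc_vpred: "a < n \<Longrightarrow> vsucc n (vpred n a) = a"
  by (auto simp: vsucc_eq vpred_eq)

lemma cdist_vsucc_right: "a < n \<Longrightarrow> u < n \<Longrightarrow>
    cdist n a (vsucc n u) = (if cdist n a u = n - 1 then 0 else cdist n a u + 1)"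
  unfolding vsucc_def by (auto simp: cdist_eq mod_if split: if_splits)

lemma cdist_vsucc_left: "a < n \<Longrightarrow> b < n \<Longrightarrow>
    cdist n (vsucc n a) b = (if a = b then n - 1 else cdist n a b - 1)"
  by (auto simp: cdist_eq vsucc_eq split: if_splits)

lemma cdist_vpred_right: "a < n \<Longrightarrow> b < n \<Longrightarrow>
    cdist n a (vpred n b) = (if a = b then n - 1 else cdist n a b - 1)"
  by (auto simp: cdist_eq vpred_eq split: if_splits)

lemma cdist_vsucc_right_Suc: "a < n \<Longrightarrow> b < n \<Longrightarrow> vsucc n b \<noteq> a \<Longrightarrow>
    cdist n a (vsucc n b) = cdist n a b + 1"
  by (auto simp: cdist_eq vsucc_eq split: if_splits)

lemma cdist_vpred_left_Suc: "a < n \<Longrightarrow> b < n \<Longrightarrow> vpred n a \<noteq> b \<Longrightarrow>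
    cdist n (vpred n a) b = cdist n a b + 1"
  by (auto simp: cdist_eq vpred_eq split: if_splits)

lemma vsucc_neq_if_cdist_ge_2: "p < n \<Longrightarrow> q < n \<Longrightarrow> 2 \<le> cdist n p q \<Longrightarrow> vsucc n p \<noteq> q"
proof
  assume a: "p < n" "q < n" "2 \<le> cdist n p q" "vsucc n p = q"
  have "n > 2" using a cdist_less[of p n q] by auto
  then have "cdist n p (vsucc n p) = 1" using cdist_vsucc_right[of p n p] a by auto
  then show False using a by auto
qed

lemma cint_iff_cdist: "a < n \<Longrightarrow> b < n \<Longrightarrow> x \<in> cint n a b \<longleftrightarrow> x < n \<and> cdist n a x \<le> cdist n a b"
  unfolding cint_def cdist_def by auto

lemma cint_iff_cdist_end: "a < n \<Longrightarrow> p < n \<Longrightarrow> x \<in> cint n a p \<longleftrightarrow> x < n \<and> cdist n x p \<le> cdist n a p"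
  by (auto simp: cint_iff_cdist cdist_eq split: if_splits)

lemma cint_iff_cdist_base: "a < n \<Longrightarrow> u < n \<Longrightarrow> v < n \<Longrightarrow> y < n \<Longrightarrow> y \<in> cint n u v \<longleftrightarrow>
  (if cdist n a u \<le> cdist n a y then cdist n a y - cdist n a u else cdist n a y + n - cdist n a u) \<le>
  (if cdist n a u \<le> cdist n a v then cdist n a v - cdist n a u else cdist n a v + n - cdist n a u)"
  by (auto simp: cint_iff_cdist cdist_eq split: if_splits)

lemma left_mem_cint: "a < n \<Longrightarrow> b < n \<Longrightarrow> a \<in> cint n a b" by (auto simp: cint_iff_cdist)

lemma right_mem_cint: "a < n \<Longrightarrow> b < n \<Longrightarrow> b \<in> cint n a b" by (auto simp: cint_iff_cdist)

lemma cint_self: "a < n \<Longrightarrow> cint n a a = {a}"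
  by (auto simp: cint_iff_cdist cdist_eq split: if_splits)

lemma card_cint:
  assumes "a < n" "b < n"
  shows "card (cint n a b) = Suc (cdist n a b)"
proof -
  have "bij_betw (cdist n a) (cint n a b) {..cdist n a b}"
  proof (rule bij_betwI')
    show "(cdist n a x = cdist n a y) = (x = y)" if "x \<in> cint n a b" "y \<in> cint n a b" for x y
      using that cdist_right_inj[of a n x y] assms by (auto simp: cint_iff_cdist)
    show "cdist n a x \<in> {..cdist n a b}" if "x \<in> cint n a b" for x
      using that assms by (auto simp: cint_iff_cdist)
    show "\<exists>x\<in>cint n a b. k = cdist n a x" if "k \<in> {..cdist n a b}" for k
      using that assms cdist_add_mod_self[of a n k] cdist_less[of a n b]
      by (intro bexI[of _ "(a + k) mod n"]) (auto simp: cint_iff_cdist)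
  qed
  then show ?thesis by (simp add: bij_betw_same_card)
qed

lemma cint_shrink_left: "q < n \<Longrightarrow> p < n \<Longrightarrow> x \<in> cint n q p \<Longrightarrow> x \<noteq> q \<Longrightarrow> x \<in> cint n (vsucc n q) p"
  by (auto simp: cint_iff_cdist cdist_eq vsucc_eq split: if_splits)

lemma cint_shrink_right: "q < n \<Longrightarrow> p < n \<Longrightarrow> x \<in> cint n q p \<Longrightarrow> x \<noteq> p \<Longrightarrow> x \<in> cint n q (vpred n p)"
  by (auto simp: cint_iff_cdist cdist_eq vpred_eq split: if_splits)

lemma cint_end_nested:
  assumes "u < n" "q < n" "p < n" "p \<noteq> q" "u \<noteq> q"
  shows "cint n u p \<subseteq> cint n (vsucc n q) p \<or> cint n q p \<subseteq> cint n (vsucc n u) p"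
proof (cases "cdist n u p \<le> cdist n q p - 1")
  case True
  have "cdist n (vsucc n q) p = cdist n q p - 1" using cdist_vsucc_left[of q n p] assms by auto
  then have "cint n u p \<subseteq> cint n (vsucc n q) p"
    using True assms vsucc_less[of q n] by (auto simp: cint_iff_cdist_end)
  then show ?thesis by blast
next
  case False
  have "cdist n u p \<noteq> cdist n q p" using cdist_left_inj[of u n q p] assms by auto
  then have g: "cdist n u p > cdist n q p" using False by auto
  then have "u \<noteq> p" by auto
  then have "cdist n (vsucc n u) p = cdist n u p - 1" using cdist_vsucc_left[of u n p] assms by auto
  then have "cint n q p \<subseteq> cint n (vsucc n u) p"
    using g assms vsucc_less[of u n] by (auto simp: cint_iff_cdist_end)
  then show ?thesis by blast
qed

lemma cint_start_nested:
  assumes "u < n" "q < n" "p < n" "p \<noteq> q" "u \<noteq> p"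
  shows "cint n q u \<subseteq> cint n q (vpred n p) \<or> cint n q p \<subseteq> cint n q (vpred n u)"
proof (cases "cdist n q u \<le> cdist n q p - 1")
  case True
  have "cdist n q (vpred n p) = cdist n q p - 1" using cdist_vpred_right[of q n p] assms by auto
  then have "cint n q u \<subseteq> cint n q (vpred n p)"
    using True assms vpred_less[of p n] by (auto simp: cint_iff_cdist)
  then show ?thesis by blast
next
  case False
  have "cdist n q u \<noteq> cdist n q p" using cdist_right_inj[of q n u p] assms by auto
  then have g: "cdist n q u > cdist n q p" using False by auto
  then have "u \<noteq> q" by auto
  then have "cdist n q (vpred n u) = cdist n q u - 1"
    using cdist_vpred_right[of q n u] assms by auto
  then have "cint n q p \<subseteq> cint n q (vpred n u)"
    using g assms vpred_less[of u n] by (auto simp: cint_iff_cdist)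
  then show ?thesis by blast
qed

lemma mem_cint_complement: "u < n \<Longrightarrow> v < n \<Longrightarrow> x < n \<Longrightarrow> x \<notin> cint n u v \<Longrightarrow>
    x \<in> cint n (vsucc n v) (vpred n u)"
proof -
  assume a: "u < n" "v < n" "x < n" "x \<notin> cint n u v"
  define v' where "v' = vsucc n v"
  define u' where "u' = vpred n u"
  have v': "v' = (if v + 1 = n then 0 else v + 1)" using a v'_def vsucc_eq by auto
  have u': "u' = (if u = 0 then n - 1 else u - 1)" using a u'_def vpred_eq by auto
  have "v' < n" "u' < n" using v' u' a by auto
  then show ?thesis using a v' u' unfolding v'_def[symmetric] u'_def[symmetric]
    by (auto simp: cint_iff_cdist cdist_eq split: if_splits)
qed

lemma not_mem_cint_complement: "u < n \<Longrightarrow> v < n \<Longrightarrow> y < n \<Longrightarrow> y \<notin> cint n u v \<Longrightarrow> x \<in> cint n u v \<Longrightarrow>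
    x \<notin> cint n (vsucc n v) (vpred n u)"
  by (auto simp: cint_iff_cdist cdist_eq vsucc_eq vpred_eq split: if_splits)

lemma cint_subset_if_avoids_neighbours:
  assumes "c < n" "d < n" "u < n" "v < n" "z < n" "x < n" "cdist n c d + 2 < n"
    "z \<in> cint n c d" "z \<in> cint n u v" "vpred n c \<notin> cint n u v" "vsucc n d \<notin> cint n u v"
    "x \<in> cint n u v"
  shows "x \<in> cint n c d"
proof -
  have p1: "cdist n c (vpred n c) = n - 1" using cdist_vpred_right[of c n c] assms by simp
  have p2: "cdist n c (vsucc n d) = cdist n c d + 1"
    using cdist_vsucc_right_Suc[of c n d] cdist_vsucc_right[of c n d] assms by auto
  have b: "cdist n c u < n" "cdist n c v < n" "cdist n c z < n" "cdist n c x < n"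
    using cdist_less assms by auto
  show ?thesis using assms p1 p2 b vpred_less[of c n] vsucc_less[of d n]
    by (auto simp: cint_iff_cdist_base[of c] split: if_splits; arith)
qed

lemma subset_cint_with_ends:
  assumes "a < n" "b < n" "a \<noteq> b" "2 \<le> k" "k \<le> Suc (cdist n a b)"
  shows "\<exists>e. card e = k \<and> a \<in> e \<and> b \<in> e \<and> e \<subseteq> cint n a b"
proof -
  have fin: "finite (cint n a b)" by (auto simp: cint_def)
  have "card (cint n a b - {a, b}) = cdist n a b - 1"
    using card_cint[of a n b] left_mem_cint[of a n b] right_mem_cint[of a n b] assms fin
    by (simp add: card_Diff_subset)
  then have "k - 2 \<le> card (cint n a b - {a, b})" using assms by auto
  then obtain T where T: "T \<subseteq> cint n a b - {a, b}" "card T = k - 2"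
    by (meson obtain_subset_with_card_n)
  have "finite T" using T(1) fin finite_subset by blast
  moreover have "a \<notin> T" "b \<notin> T" using T(1) by auto
  ultimately have "card (insert a (insert b T)) = k" using T(2) assms(3,4) by simp
  moreover have "insert a (insert b T) \<subseteq> cint n a b"
    using T(1) left_mem_cint[of a n b] right_mem_cint[of a n b] assms by auto
  ultimately show ?thesis by blast
qed

definition btw :: "nat \<Rightarrow> nat \<Rightarrow> nat \<Rightarrow> nat \<Rightarrow> bool" where
  "btw n a x b \<longleftrightarrow> 0 < cdist n a x \<and> cdist n a x < cdist n a b"

lemma btw_cases: "x \<noteq> y \<Longrightarrow> x < n \<Longrightarrow> y < n \<Longrightarrow> u < n \<Longrightarrow> u \<noteq> x \<Longrightarrow> u \<noteq> y \<Longrightarrow> btw n x u y \<or> btw n y u x"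
  unfolding btw_def by (auto simp: cdist_eq split: if_splits)

lemma btw_wrap: "m < y \<Longrightarrow> y < x \<Longrightarrow> x < n \<Longrightarrow> btw n x m y"
  unfolding btw_def by (auto simp: cdist_eq)

lemma btw_of_mem_cint:
  assumes "u < n" "v < n" "x < n" "y < n" "z < n" "y \<notin> cint n u v" "btw n x u y" "z \<in> cint n u v"
  shows "btw n x z y"
proof -
  have u: "0 < cdist n x u" "cdist n x u < cdist n x y" using assms(7) unfolding btw_def by auto
  have uy: "cdist n u y = cdist n x y - cdist n x u"
    using cdist_rebase_le[of x n u y] assms u by auto
  have "cdist n u y > cdist n u v" using assms by (auto simp: cint_iff_cdist)
  moreover have "cdist n u z \<le> cdist n u v" using assms by (auto simp: cint_iff_cdist)
  ultimately have a: "cdist n x u + cdist n u z < cdist n x y" using uy u by auto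
  have "cdist n x z = (cdist n x u + cdist n u z) mod n"
    using cdist_add_mod[of x n u z] assms by auto
  also have "\<dots> = cdist n x u + cdist n u z" using a cdist_less[of x n y] assms by auto
  finally show ?thesis using a u unfolding btw_def by auto
qed

lemma btw_vsucc:
  assumes "p < n" "q < n" "t < n" "btw n p t q" "vsucc n t \<noteq> q"
  shows "btw n p (vsucc n t) q"
proof -
  have "cdist n p t < cdist n p q" "cdist n p q < n"
    using assms cdist_less[of p n q] unfolding btw_def by auto
  then have e: "cdist n p (vsucc n t) = cdist n p t + 1"
    using cdist_vsucc_right[of p n t] assms by auto
  have "cdist n p (vsucc n t) \<noteq> cdist n p q"
    using cdist_right_inj[of p n "vsucc n t" q] assms vsucc_less[of t n] by auto
  then show ?thesis using e assms unfolding btw_def by auto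
qed

lemma btw_of_cdist_ge:
  assumes "p < n" "q < n" "t < n" "p \<noteq> q" "t \<noteq> q" "vsucc n p \<noteq> q"
    "cdist n q (vsucc n p) \<le> cdist n q t"
  shows "btw n p t q"
proof -
  have e1: "cdist n q (vsucc n p) = cdist n q p + 1"
    using cdist_vsucc_right_Suc[of q n p] assms by auto
  have e2: "cdist n q p = n - cdist n p q" using cdist_add_swap[of p n q] assms by auto
  have b: "cdist n p t < n" "cdist n p q < n" "0 < cdist n p q"
    using cdist_less[of p n] cdist_eq_0_iff[of p n q] assms by auto
  show ?thesis
  proof (cases "cdist n p q \<le> cdist n p t")
    case True
    then have "cdist n q t = cdist n p t - cdist n p q"
      using cdist_rebase_le[of p n q t] assms by auto
    then show ?thesis using e1 e2 b assms by auto
  next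
    case False
    then have "cdist n q t = cdist n p t + n - cdist n p q"
      using cdist_rebase_gt[of p n q t] assms by auto
    then show ?thesis using e1 e2 b assms False unfolding btw_def by auto
  qed
qed

lemma cint_of_btw_vsucc:
  assumes "p < n" "q < n" "2 \<le> cdist n p q" "btw n q z (vsucc n p)" "z < n"
  shows "z \<in> cint n (vsucc n q) p"
proof -
  have pq: "p \<noteq> q" using assms by auto
  have "vsucc n p \<noteq> q" using vsucc_neq_if_cdist_ge_2 assms by auto
  then have "cdist n q (vsucc n p) = cdist n q p + 1"
    using cdist_vsucc_right_Suc[of q n p] assms by auto
  then have "0 < cdist n q z" "cdist n q z \<le> cdist n q p" using assms(4) unfolding btw_def by auto
  then have "z \<noteq> q" "cdist n (vsucc n q) z = cdist n q z - 1"
    "cdist n (vsucc n q) p = cdist n q p - 1"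
    using cdist_vsucc_left[of q n z] cdist_vsucc_left[of q n p] assms pq by auto
  then show ?thesis
    using \<open>cdist n q z \<le> cdist n q p\<close> assms vsucc_less[of q n] by (auto simp: cint_iff_cdist)
qed

lemma cint_of_btw_vsucc_start:
  assumes "p < n" "q < n" "2 \<le> cdist n p q" "btw n (vsucc n p) z q" "z < n"
  shows "z \<in> cint n (vsucc n p) (vpred n q)"
proof -
  have ne: "vsucc n p \<noteq> q" using vsucc_neq_if_cdist_ge_2 assms by auto
  have "cdist n (vsucc n p) (vpred n q) = cdist n (vsucc n p) q - 1"
    using cdist_vpred_right[of "vsucc n p" n q] ne assms vsucc_less[of p n] by auto
  then show ?thesis
    using assms vsucc_less[of p n] vpred_less[of q n] unfolding btw_def
    by (auto simp: cint_iff_cdist)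
qed

lemma cint_subset_cint_vsucc_of_btw:
  assumes "p < n" "q < n" "a < n" "b < n" "2 \<le> cdist n p q"
    "vsucc n p \<notin> cint n a b" "btw n q a (vsucc n p)"
  shows "cint n a b \<subseteq> cint n (vsucc n q) p"
proof
  fix z assume z: "z \<in> cint n a b"
  then have "z < n" by (simp add: cint_def)
  then have "btw n q z (vsucc n p)"
    using btw_of_mem_cint[of a n b q "vsucc n p" z] assms z vsucc_less[of p n] by auto
  then show "z \<in> cint n (vsucc n q) p" using cint_of_btw_vsucc[of p n q z] assms \<open>z < n\<close> by auto
qed

lemma cint_subset_cint_vpred_of_btw:
  assumes "p < n" "q < n" "a < n" "b < n" "2 \<le> cdist n p q"
    "q \<notin> cint n a b" "btw n (vsucc n p) a q"
  shows "cint n a b \<subseteq> cint n (vsucc n p) (vpred n q)"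
proof
  fix z assume z: "z \<in> cint n a b"
  then have "z < n" by (simp add: cint_def)
  then have "btw n (vsucc n p) z q"
    using btw_of_mem_cint[of a n b "vsucc n p" q z] assms z vsucc_less[of p n] by auto
  then show "z \<in> cint n (vsucc n p) (vpred n q)"
    using cint_of_btw_vsucc_start[of p n q z] assms \<open>z < n\<close> by auto
qed

lemma not_mem_cint_if_outside:
  assumes "a < n" "b < n" "c < n" "z < n" "cdist n a c \<le> cdist n a b"
    "cdist n a z < cdist n a c \<or> cdist n a b < cdist n a z"
  shows "z \<notin> cint n c b"
proof -
  have cb: "cdist n c b = cdist n a b - cdist n a c" using cdist_rebase_le[of a n c b] assms by auto
  have "cdist n a b < n" using cdist_less[of a n b] assms by auto
  show ?thesis
  proof (cases "cdist n a z < cdist n a c")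
    case True
    then have "cdist n c z = cdist n a z + n - cdist n a c"
      using cdist_rebase_gt[of a n c z] assms by auto
    then show ?thesis using cb True \<open>cdist n a b < n\<close> assms by (auto simp: cint_iff_cdist)
  next
    case False
    then have "cdist n c z = cdist n a z - cdist n a c"
      using cdist_rebase_le[of a n c z] assms by auto
    then show ?thesis using cb False assms by (auto simp: cint_iff_cdist)
  qed
qed

lemma cint_disjoint_of_btw:
  assumes "p < n" "q < n" "s < n" "btw n p s q" "A \<subseteq> cint n q p"
  shows "A \<inter> cint n s (vpred n q) = {}"
proof -
  have pq: "p \<noteq> q" using assms unfolding btw_def by auto
  have e: "cdist n p (vpred n q) = cdist n p q - 1"
    using cdist_vpred_right[of p n q] pq assms by auto
  have qp: "cdist n q p = n - cdist n p q" using cdist_add_swap[of p n q] pq assms by auto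
  have s1: "0 < cdist n p s" "cdist n p s < cdist n p q" using assms(4) unfolding btw_def by auto
  have "x \<notin> cint n s (vpred n q)" if x: "x \<in> cint n q p" for x
  proof -
    have "x < n" using x by (simp add: cint_def)
    have "cdist n p x = 0 \<or> cdist n p q \<le> cdist n p x"
    proof (cases "cdist n p q \<le> cdist n p x")
      case False
      then have "cdist n q x = cdist n p x + n - cdist n p q"
        using cdist_rebase_gt[of p n q x] assms \<open>x < n\<close> by auto
      then show ?thesis using qp x assms cdist_less[of p n q] by (auto simp: cint_iff_cdist)
    qed auto
    then have "cdist n p x < cdist n p s \<or> cdist n p (vpred n q) < cdist n p x" using e s1 by auto
    moreover have "cdist n p s \<le> cdist n p (vpred n q)" using e s1 by auto
    ultimately show ?thesis
      using not_mem_cint_if_outside[of p n "vpred n q" s x] assms \<open>x < n\<close> vpred_less[of q n] by auto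
  qed
  then show ?thesis using assms(5) by blast
qed

lemma cint_vpred_of_short_step:
  assumes "a < n" "b < n" "c < n" "x < n" "y < n" "btw n a c b" "btw n a x c"
    "0 < cdist n x y" "cdist n x y \<le> cdist n x b" "z \<in> cint n b a"
  shows "z \<in> cint n y (vpred n x)"
proof -
  note h = assms[unfolded btw_def]
  have z: "z < n" using h by (auto simp: cint_iff_cdist)
  define X where "X = cdist n a x"
  define B where "B = cdist n a b"
  define Y where "Y = cdist n a y"
  define Z where "Z = cdist n a z"
  have xb: "cdist n x b = B - X" using h cdist_rebase_le[of a n x b] unfolding X_def B_def by auto
  have Y: "X < Y \<and> Y \<le> B"
  proof (cases "X \<le> Y")
    case True
    then show ?thesis using h xb cdist_rebase_le[of a n x y] unfolding X_def Y_def B_def by auto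
  next
    case False
    then show ?thesis
      using h xb cdist_rebase_gt[of a n x y] cdist_less[of a n b] unfolding X_def Y_def B_def
      by auto
  qed
  have ba: "cdist n b a = n - B" using h cdist_rebase_gt[of a n b a] unfolding B_def by auto
  have Zc: "Z = 0 \<or> B \<le> Z"
  proof (cases "B \<le> Z")
    case False
    then show ?thesis
      using h ba cdist_rebase_gt[of a n b z] z cdist_less[of a n b] unfolding B_def Z_def
      by (auto simp: cint_iff_cdist)
  qed auto
  have xp: "cdist n a (vpred n x) = X - 1"
    using h cdist_vpred_right[of a n x] unfolding X_def by auto
  have yx: "cdist n y (vpred n x) = X - 1 + n - Y"
    using cdist_rebase_gt[of a n y "vpred n x"] h xp Y vpred_less[of x n]
    unfolding X_def Y_def by auto
  show ?thesis
  proof (cases "Z = 0")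
    case True
    then have "cdist n y z = n - Y"
      using cdist_rebase_gt[of a n y z] h z Y unfolding Y_def Z_def by auto
    then show ?thesis
      using yx z h Y vpred_less[of x n] unfolding X_def by (auto simp: cint_iff_cdist)
  next
    case False
    then have "cdist n y z = Z - Y"
      using cdist_rebase_le[of a n y z] h z Y Zc unfolding Y_def Z_def by auto
    then show ?thesis
      using yx z h Y Zc False vpred_less[of x n] cdist_less[of a n z] unfolding X_def Z_def
      by (auto simp: cint_iff_cdist)
  qed
qed

lemma not_mem_cint_of_long_step:
  assumes "a < n" "b < n" "c < n" "x < n" "y < n" "z < n" "btw n a c b" "btw n a x c"
    "cdist n x b < cdist n x y" "z \<in> cint n y x"
  shows "z \<notin> cint n c b"
proof -
  have xb: "cdist n x b = cdist n a b - cdist n a x"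
    using cdist_rebase_le[of a n x b] assms unfolding btw_def by auto
  have b: "cdist n a x < n" "cdist n a y < n" "cdist n a z < n" "cdist n a b < n" "cdist n a c < n"
    using cdist_less assms by auto
  have zyx: "cdist n y z \<le> cdist n y x" using assms by (auto simp: cint_iff_cdist)
  have Z: "cdist n a z < cdist n a c \<or> cdist n a b < cdist n a z"
  proof (cases "cdist n a x \<le> cdist n a y")
    case True
    then have "cdist n x y = cdist n a y - cdist n a x"
      using cdist_rebase_le[of a n x y] assms by auto
    then have Yb: "cdist n a b < cdist n a y" using xb assms by auto
    then have yx: "cdist n y x = cdist n a x + n - cdist n a y"
      using cdist_rebase_gt[of a n y x] assms True
      unfolding btw_def by auto
    show ?thesis
    proof (cases "cdist n a y \<le> cdist n a z")
      case True
      then show ?thesis using Yb by auto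
    next
      case False
      then have "cdist n y z = cdist n a z + n - cdist n a y"
        using cdist_rebase_gt[of a n y z] assms by auto
      then show ?thesis using zyx yx assms b unfolding btw_def by auto
    qed
  next
    case False
    note F = False
    then have yx: "cdist n y x = cdist n a x - cdist n a y"
      using cdist_rebase_le[of a n y x] assms by auto
    show ?thesis
    proof (cases "cdist n a y \<le> cdist n a z")
      case True
      then have "cdist n y z = cdist n a z - cdist n a y"
        using cdist_rebase_le[of a n y z] assms by auto
      then show ?thesis using zyx yx assms True F unfolding btw_def by auto
    next
      case False
      then have "cdist n y z = cdist n a z + n - cdist n a y"
        using cdist_rebase_gt[of a n y z] assms by auto
      then show ?thesis using zyx yx b by auto
    qed
  qed
  show ?thesis using not_mem_cint_if_outside[of a n b c z] Z assms unfolding btw_def by auto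
qed

lemma add_mod_eq_imp_eq_diff: "x = c - a" if "(a + x) mod n = (c::nat)" "a \<le> c" "c < n" "x < n"
proof (cases "a + x < n")
  case True
  then show ?thesis using that by auto
next
  case False
  then have "(a + x) mod n = (a + x - n) mod n" by (simp add: le_mod_geq)
  also have "\<dots> = a + x - n" using that by auto
  finally show ?thesis using that by auto
qed

lemma sum_cdist_mod:
  assumes "\<forall>k\<le>L. E k < n" "k \<le> L"
  shows "(\<Sum>i<k. cdist n (E i) (E (Suc i))) mod n = cdist n (E 0) (E k)"
  using assms(2)
proof (induction k)
  case (Suc k)
  have "(\<Sum>i<Suc k. cdist n (E i) (E (Suc i))) mod n
      = ((\<Sum>i<k. cdist n (E i) (E (Suc i))) mod n + cdist n (E k) (E (Suc k))) mod n"
    by (simp add: mod_add_left_eq)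
  also have "\<dots> = (cdist n (E 0) (E k) + cdist n (E k) (E (Suc k))) mod n" using Suc by simp
  also have "\<dots> = cdist n (E 0) (E (Suc k))"
    using cdist_add_mod[of "E 0" n "E k" "E (Suc k)"] assms(1) Suc.prems by auto
  finally show ?case .
qed simp

lemma closed_walk_btw:
  fixes E :: "nat \<Rightarrow> nat"
  assumes E: "\<forall>k\<le>L. E k < n" and cyc: "E L = E 0" and mv: "j < L" "E (Suc j) \<noteq> E j"
    and z: "z < n" "\<forall>k<L. z \<noteq> E k"
  shows "\<exists>k<L. btw n (E k) z (E (Suc k))"
proof -
  define S where "S k = (\<Sum>i<k. cdist n (E i) (E (Suc i)))" for k
  have Smod: "S k mod n = cdist n (E 0) (E k)" if "k \<le> L" for k
    unfolding S_def using sum_cdist_mod[OF E that] .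
  \<comment> \<open>The walk makes at least one full turn, so some step passes over z.\<close>
  have "cdist n (E j) (E (Suc j)) \<le> S L"
    unfolding S_def using mv by (intro member_le_sum) auto
  moreover have "cdist n (E j) (E (Suc j)) > 0"
    using cdist_eq_0_iff[of "E j" n "E (Suc j)"] E mv by auto
  ultimately have SL: "S L > 0" by auto
  have "S L mod n = 0" using Smod[of L] cyc by auto
  then have SLn: "S L \<ge> n" using SL by (cases "S L < n") auto
  define Pz where "Pz = cdist n (E 0) z"
  have Pz: "Pz < n" unfolding Pz_def using cdist_less[of "E 0" n z] E by auto
  have "0 \<le> L \<and> S 0 \<le> Pz" by (simp add: S_def)
  then obtain k where k: "k \<le> L" "S k \<le> Pz" and k_max: "\<And>k'. k' \<le> L \<Longrightarrow> S k' \<le> Pz \<Longrightarrow> k' \<le> k"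
    using Nat.ex_has_greatest_nat[of "\<lambda>k. k \<le> L \<and> S k \<le> Pz" 0 L] by auto
  have kL: "k < L" using k SLn Pz by (cases "k = L") auto
  have Sk1: "S (Suc k) > Pz" using k_max[of "Suc k"] kL by force
  have Sk: "S k < n" using k Pz by auto
  have ek: "cdist n (E 0) (E k) = S k" using Smod[of k] k Sk by auto
  have "Pz = (cdist n (E 0) (E k) + cdist n (E k) z) mod n"
    unfolding Pz_def using cdist_add_mod[of "E 0" n "E k" z] E kL z by auto
  then have ez: "cdist n (E k) z = Pz - S k"
    using add_mod_eq_imp_eq_diff[of "S k" "cdist n (E k) z" n Pz] ek k Pz
      cdist_less[of "E k" n z] E kL by auto
  have "cdist n (E k) z \<noteq> 0" using cdist_eq_0_iff[of "E k" n z] E kL z by auto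
  moreover have "S (Suc k) = S k + cdist n (E k) (E (Suc k))" by (simp add: S_def)
  ultimately have "btw n (E k) z (E (Suc k))" using ez Sk1 k unfolding btw_def by auto
  then show ?thesis using kL by auto
qed

lemma odd_double_mod_inj:
  assumes "odd P" "a < P" "b < P" "(2 * a) mod P = (2 * b) mod P"
  shows "(a::nat) = b"
proof -
  have "a = b" if "b \<le> a" "a < P" "(2 * a) mod P = (2 * b) mod P" for a b :: nat
  proof -
    have "P dvd 2 * a - 2 * b" using mod_eq_dvd_iff_nat[of "2*b" "2*a" P] that by auto
    then obtain c where c: "2 * a - 2 * b = P * c" by (auto elim: dvdE)
    have "P * c < P * 2" using c that by linarith
    then have "c = 0 \<or> c = 1" by auto
    then show ?thesis
    proof
      assume "c = 1"
      then have "P = 2 * (a - b)" using c by auto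
      then show ?thesis using assms(1) by auto
    qed (use c that in auto)
  qed
  then show ?thesis using assms by (metis nat_le_linear)
qed

lemma sorted_rotate_if_ascending:
  fixes u :: "nat \<Rightarrow> 'a::linorder"
  assumes m0: "m0 < P" and ascend: "\<And>k. k < P \<Longrightarrow> Suc k mod P \<noteq> m0 \<Longrightarrow> u k < u (Suc k mod P)"
  shows "sorted_wrt (<) (rotate m0 (map u [0..<P]))"
proof (subst sorted_wrt_iff_nth_Suc_transp)
  show "transp ((<) :: 'a \<Rightarrow> 'a \<Rightarrow> bool)" by (auto simp: transp_def)
  show "\<forall>i. Suc i < length (rotate m0 (map u [0..<P])) \<longrightarrow>
      rotate m0 (map u [0..<P]) ! i < rotate m0 (map u [0..<P]) ! Suc i"
  proof (intro allI impI)
    fix i assume "Suc i < length (rotate m0 (map u [0..<P]))"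
    then have i: "Suc i < P" by simp
    have "(m0 + Suc i) mod P \<noteq> m0"
    proof
      assume "(m0 + Suc i) mod P = m0"
      then have "P dvd (m0 + Suc i) - m0" using mod_eq_dvd_iff_nat[of m0 "m0 + Suc i" P] m0 by auto
      then show False using i by (auto dest: dvd_imp_le)
    qed
    moreover have "(m0 + Suc i) mod P = Suc ((m0 + i) mod P) mod P" by (simp add: mod_Suc_eq)
    ultimately show "rotate m0 (map u [0..<P]) ! i < rotate m0 (map u [0..<P]) ! Suc i"
      using ascend[of "(m0 + i) mod P"] i by (simp add: nth_rotate)
  qed
qed

lemma cyc_ordered_if_no_btw:
  fixes u :: "nat \<Rightarrow> nat"
  assumes P: "0 < P" and lt: "\<forall>k<P. u k < n" and dist: "distinct (map u [0..<P])"
    and nb: "\<forall>k<P. \<forall>m<P. \<not> btw n (u k) (u m) (u (Suc k mod P))"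
  shows "cyc_ordered (map u [0..<P])"
proof -
  have "Min (u ` {..<P}) \<in> u ` {..<P}" using P by (intro Min_in) auto
  then obtain m0 where m0: "m0 < P" "u m0 = Min (u ` {..<P})" by auto
  then have m0_min: "u m0 \<le> u k" if "k < P" for k
    using that by (simp add: Min_le)
  have inj: "inj_on u {..<P}" using dist by (simp add: distinct_map atLeast0LessThan)
  \<comment> \<open>A descending step from k to k' would put the minimum u m0 into the arc (u k, u k').\<close>
  have "u k < u (Suc k mod P)" if k: "k < P" "Suc k mod P \<noteq> m0" for k
  proof (rule ccontr)
    let ?k' = "Suc k mod P"
    assume not_less: "\<not> u k < u ?k'"
    have "k \<noteq> ?k'"
    proof (cases "Suc k < P")
      case False
      then have "Suc k = P" using k by simp
      then show ?thesis using k m0 by auto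
    qed simp
    moreover have "?k' < P" using P by simp
    ultimately have "u ?k' \<noteq> u k" using inj k(1) by (metis inj_onD lessThan_iff)
    then have "u ?k' < u k" using not_less by simp
    moreover have "u m0 < u ?k'"
      using m0_min[of ?k'] inj k m0 \<open>?k' < P\<close> by (metis inj_onD lessThan_iff le_neq_implies_less)
    ultimately have "btw n (u k) (u m0) (u ?k')" using btw_wrap lt k by blast
    then show False using nb k m0 by blast
  qed
  then have "sorted_wrt (<) (rotate m0 (map u [0..<P]))"
    using sorted_rotate_if_ascending[OF m0(1)] by blast
  then show ?thesis unfolding cyc_ordered_def by blast
qed

lemma orbit_periodic:
  fixes w :: "nat \<Rightarrow> 'a"
  assumes fwd: "\<And>i. w (Suc i) = f (w i)" and bwd: "\<And>i. g (w (Suc i)) = w i"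
    and fin: "finite (range w)"
  shows "\<exists>P>0. (\<forall>i. w (i + P) = w i) \<and> inj_on w {..<P}"
proof -
  have backward: "w (i - m) = w (j - m)" if "w i = w j" "m \<le> i" "m \<le> j" for i j m
    using that
  proof (induction m)
    case (Suc m)
    then have "g (w (Suc (i - Suc m))) = g (w (Suc (j - Suc m)))" by (simp add: Suc_diff_Suc)
    then show ?case by (simp only: bwd)
  qed simp
  have "\<not> inj w" using fin finite_imageD infinite_UNIV_nat by blast
  then obtain i j where ij: "i < j" "w i = w j" unfolding inj_def by (metis linorder_neqE_nat)
  then have "w (j - i) = w 0" using backward[of i j i] by simp
  define P where "P = (LEAST P. 0 < P \<and> w P = w 0)"
  have P: "0 < P" "w P = w 0"
    using LeastI[of "\<lambda>P. 0 < P \<and> w P = w 0" "j - i"] \<open>w (j - i) = w 0\<close> ij by (auto simp: P_def)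
  have P_min: "P \<le> Q" if "0 < Q" "w Q = w 0" for Q
    unfolding P_def using that by (simp add: Least_le)
  have "w (i + P) = w i" for i by (induction i) (simp_all add: P fwd)
  moreover have "inj_on w {..<P}"
  proof (rule inj_onI)
    have False if "a < b" "b < P" "w a = w b" for a b
      using backward[of a b a] P_min[of "b - a"] that by simp
    then show "a = b" if "a \<in> {..<P}" "b \<in> {..<P}" "w a = w b" for a b
      using that by (metis lessThan_iff linorder_neqE_nat)
  qed
  ultimately show ?thesis using P by blast
qed

lemma periodic_mod_eq:
  fixes w :: "nat \<Rightarrow> 'a" and P :: nat
  assumes per: "\<And>i. w (i + P) = w i"
  shows "w (x mod P) = w x"
proof -
  have multiple: "w (y + k * P) = w y" for y k
  proof (induction k)
    case (Suc k)
    have "w (y + Suc k * P) = w ((y + k * P) + P)" by (simp add: algebra_simps)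
    then show ?case using per Suc.IH by simp
  qed simp
  then show ?thesis using multiple[of "x mod P" "x div P"] by (simp add: mod_div_mult_eq)
qed

lemma map_double_period_odd:
  assumes per: "\<And>i. w (i + (2*l+1)) = w i"
  shows "map (\<lambda>j. w (2*j)) [0..<l+1] @ map (\<lambda>j. w (2*j+1)) [0..<l] = map (\<lambda>k. w (2*k)) [0..<2*l+1]"
proof (rule nth_equalityI)
  fix k assume "k < length (map (\<lambda>j. w (2*j)) [0..<l+1] @ map (\<lambda>j. w (2*j+1)) [0..<l])"
  then have k: "k < 2 * l + 1" by simp
  show "(map (\<lambda>j. w (2*j)) [0..<l+1] @ map (\<lambda>j. w (2*j+1)) [0..<l]) ! k =
      map (\<lambda>k. w (2*k)) [0..<2*l+1] ! k"
  proof (cases "k < l + 1")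
    case True
    then show ?thesis using k by (simp add: nth_append del: upt_Suc)
  next
    case False
    then have "2 * (k - (l+1)) + 1 + (2*l+1) = 2 * k" by auto
    then have "w (2 * (k - (l+1)) + 1) = w (2 * k)" using per[of "2 * (k - (l+1)) + 1"] by simp
    moreover have "k - (l + 1) < l" using k False by auto
    ultimately show ?thesis using k False by (simp add: nth_append del: upt_Suc)
  qed
qed simp

locale M1_saturated_cgh =
  fixes n r :: nat and H :: "nat set set"
  assumes r_ge_2: "2 \<le> r" and n_ge_2r: "2 * r \<le> n" and saturated: "M1_saturated n r H"
begin

lemma four_le_n: "4 \<le> n" using r_ge_2 n_ge_2r by auto

lemma edge_card: "h \<in> H \<Longrightarrow> card h = r"
  using saturated by (auto simp: M1_saturated_def r_sets_def)

lemma edge_less: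
  assumes "h \<in> H" "x \<in> h"
  shows "x < n"
proof -
  have "h \<in> r_sets n r" using saturated assms(1) unfolding M1_saturated_def by blast
  then show ?thesis using assms(2) by (auto simp: r_sets_def)
qed

lemma no_M1: "\<not> has_M1 n H"
  using saturated by (simp add: M1_saturated_def)

lemma saturation: "e \<in> r_sets n r - H \<Longrightarrow> has_M1 n (insert e H)"
  using saturated by (simp add: M1_saturated_def)

lemma edge_not_single: "h \<in> H \<Longrightarrow> \<not> h \<subseteq> {a}"
proof
  assume h: "h \<in> H" "h \<subseteq> {a}"
  then have "card h \<le> card {a}" by (intro card_mono) auto
  then show False using edge_card[OF h(1)] r_ge_2 by auto
qed

lemma edge_not_subset_cint_self: "h \<in> H \<Longrightarrow> a < n \<Longrightarrow> \<not> h \<subseteq> cint n a a"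
  using edge_not_single cint_self by auto

lemma no_disjoint_edge_pair:
  assumes "h1 \<in> H" "h2 \<in> H" "a < n" "b < n" "h1 \<subseteq> cint n a b" "h2 \<inter> cint n a b = {}"
  shows False
proof -
  have "a \<noteq> b" using assms edge_not_subset_cint_self by blast
  then have "has_M1 n H" unfolding has_M1_def using assms by blast
  then show False using no_M1 by auto
qed

lemma mem_H_if_no_edge_within_gap:
  assumes e: "e \<subseteq> {0..<n}" "card e = r"
    and gap: "\<And>a b. a < n \<Longrightarrow> b < n \<Longrightarrow> e \<inter> cint n a b = {} \<Longrightarrow> \<forall>h\<in>H. \<not> h \<subseteq> cint n a b"
  shows "e \<in> H"
proof (rule ccontr)
  assume "e \<notin> H"
  then have "e \<in> r_sets n r - H" using e by (auto simp: r_sets_def)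
  then have "has_M1 n (insert e H)" by (rule saturation)
  then obtain h1 h2 u u' where h: "h1 \<in> insert e H" "h2 \<in> insert e H" "u < n" "u' < n"
    "h1 \<subseteq> cint n u u'" "h2 \<inter> cint n u u' = {}"
    unfolding has_M1_def by blast
  have "e \<noteq> {}" using e r_ge_2 by auto
  consider "h1 \<in> H" "h2 \<in> H" | "h1 = e" "h2 = e" | "h1 \<in> H" "h2 = e" | "h1 = e" "h2 \<in> H"
    using h by auto
  then show False
  proof cases
    case 1
    then show False using no_disjoint_edge_pair h by blast
  next
    case 2
    then show False using h \<open>e \<noteq> {}\<close> by auto
  next
    case 3
    then show False using gap[of u u'] h by auto
  next
    case 4
    \<comment> \<open>Then the complementary interval contains the edge h2 but avoids e.\<close>
    obtain y where y: "y \<in> h2" using edge_not_single 4 by blast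
    have "y < n" "y \<notin> cint n u u'" using edge_less 4 y h by auto
    have "h2 \<subseteq> cint n (vsucc n u') (vpred n u)"
      using mem_cint_complement[of u n u'] h edge_less[OF 4(2)] by blast
    moreover have "e \<inter> cint n (vsucc n u') (vpred n u) = {}"
      using not_mem_cint_complement[of u n u' y] h 4 \<open>y < n\<close> \<open>y \<notin> cint n u u'\<close> by auto
    ultimately show False
      using gap[of "vsucc n u'" "vpred n u"] vsucc_less[of u' n] vpred_less[of u n] h 4 by blast
  qed
qed

lemma H_nonempty: "H \<noteq> {}"
proof
  assume "H = {}"
  moreover have "{0..<r} \<in> H"
    by (rule mem_H_if_no_edge_within_gap) (use n_ge_2r \<open>H = {}\<close> in auto)
  ultimately show False by auto
qed

lemma mem_H_if_all_edges_meet: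
  assumes c: "c < n" "d < n" "cdist n c d + 2 < n"
    and meets: "\<forall>h\<in>H. h \<inter> cint n c d \<noteq> {}" and short: "card (cint n c d) < r"
    and e: "card e = r" "vsucc n d \<in> e" "vpred n c \<in> e" "e \<subseteq> cint n (vsucc n d) (vpred n c)"
  shows "e \<in> H"
proof (rule mem_H_if_no_edge_within_gap)
  show "e \<subseteq> {0..<n}" using e(4) by (auto simp: cint_def)
  show "card e = r" by (fact e(1))
  \<comment> \<open>An edge in a gap of e meets cint c d but avoids both of its neighbours, so it fits inside it.\<close>
  fix u v assume uv: "u < n" "v < n" "e \<inter> cint n u v = {}"
  show "\<forall>h\<in>H. \<not> h \<subseteq> cint n u v"
  proof (intro ballI notI)
    fix h assume h: "h \<in> H" "h \<subseteq> cint n u v"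
    obtain z where z: "z \<in> h" "z \<in> cint n c d" using meets h by blast
    have "vpred n c \<notin> cint n u v" "vsucc n d \<notin> cint n u v" using uv e by auto
    then have "h \<subseteq> cint n c d"
      using cint_subset_if_avoids_neighbours[of c n d u v z] c uv z h edge_less[OF h(1)] by blast
    then have "card h \<le> card (cint n c d)" by (intro card_mono) (auto simp: cint_def)
    then show False using edge_card h short by auto
  qed
qed

lemma edge_avoiding_short_cint:
  assumes c: "c < n" "d < n" and short: "card (cint n c d) < r"
  shows "\<exists>h\<in>H. h \<inter> cint n c d = {}"
proof (rule ccontr)
  assume meets: "\<not> (\<exists>h\<in>H. h \<inter> cint n c d = {})"
  have D: "cdist n c d + 2 < n" using short card_cint[of c n d] c n_ge_2r r_ge_2 by auto
  define a where "a = vpred n c"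
  define b where "b = vsucc n d"
  have ab: "a < n" "b < n" using vpred_less vsucc_less c unfolding a_def b_def by auto
  have ca: "cdist n c a = n - 1" using cdist_vpred_right[of c n c] c unfolding a_def by auto
  have cb: "cdist n c b = cdist n c d + 1"
    using cdist_vsucc_right[of c n d] c D unfolding b_def by auto
  have "b \<notin> cint n c d" using cb D c ab by (auto simp: cint_iff_cdist)
  have "b \<noteq> a" using ca cb D by auto
  have "cdist n b a = n - 1 - (cdist n c d + 1)"
    using cdist_rebase_le[of c n b a] ca cb c ab D by auto
  then have "r \<le> Suc (cdist n b a)" using short card_cint[of c n d] c n_ge_2r by simp
  then obtain e where e: "card e = r" "b \<in> e" "a \<in> e" "e \<subseteq> cint n b a"
    using subset_cint_with_ends[of b n a r] \<open>b \<noteq> a\<close> ab r_ge_2 by auto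
  have e_avoids: "e \<inter> cint n c d = {}"
    using not_mem_cint_complement[of c n d b] e(4) c ab \<open>b \<notin> cint n c d\<close>
    unfolding a_def b_def by blast
  have "e \<in> H"
    using mem_H_if_all_edges_meet[OF c D _ short e[unfolded a_def b_def]] meets by blast
  then show False using meets e_avoids by blast
qed

definition tight :: "nat \<Rightarrow> nat \<Rightarrow> bool" where
  "tight p q \<longleftrightarrow> p < n \<and> q < n \<and> p \<noteq> q \<and> (\<exists>h\<in>H. p \<in> h \<and> q \<in> h \<and> h \<subseteq> cint n q p) \<and>
     (\<forall>h\<in>H. \<not> h \<subseteq> cint n q (vpred n p)) \<and> (\<forall>h\<in>H. \<not> h \<subseteq> cint n (vsucc n q) p)"

lemma tight_less: "tight p q \<Longrightarrow> p < n \<and> q < n" unfolding tight_def by auto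

lemma tight_neq: "tight p q \<Longrightarrow> p \<noteq> q" unfolding tight_def by auto

lemma tight_of_minimal_cint:
  assumes pq: "p < n" "q < n" "p \<noteq> q" and h: "h \<in> H" "h \<subseteq> cint n q p"
    and no_left: "\<forall>f\<in>H. \<not> f \<subseteq> cint n q (vpred n p)"
    and no_right: "\<forall>f\<in>H. \<not> f \<subseteq> cint n (vsucc n q) p"
  shows "tight p q"
proof -
  have "q \<in> h"
  proof (rule ccontr)
    assume "q \<notin> h"
    then have "h \<subseteq> cint n (vsucc n q) p" using cint_shrink_left[of q n p] pq h edge_less by blast
    then show False using no_right h by blast
  qed
  moreover have "p \<in> h"
  proof (rule ccontr)
    assume "p \<notin> h"
    then have "h \<subseteq> cint n q (vpred n p)" using cint_shrink_right[of q n p] pq h edge_less by blast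
    then show False using no_left h by blast
  qed
  ultimately show ?thesis unfolding tight_def using assms by blast
qed

lemma tight_pair_exists: "\<exists>p q. tight p q"
proof -
  \<comment> \<open>A largest k gives a shortest interval cint b a that contains an edge.\<close>
  define Q where "Q k \<longleftrightarrow>
    (\<exists>a b. a < n \<and> b < n \<and> a \<noteq> b \<and> cdist n a b = k \<and> (\<exists>h\<in>H. h \<subseteq> cint n b a))" for k
  obtain h0 where h0: "h0 \<in> H" using H_nonempty by auto
  have "h0 \<subseteq> cint n 1 0"
  proof
    fix x assume "x \<in> h0"
    then have "x < n" using edge_less h0 by auto
    then show "x \<in> cint n 1 0"
      using four_le_n cdist_less[of 1 n x] by (auto simp: cint_iff_cdist cdist_eq)
  qed
  moreover have "cdist n 0 1 = 1" using four_le_n by (auto simp: cdist_eq)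
  ultimately have Q1: "Q 1" unfolding Q_def
    using four_le_n h0 by (intro exI[of _ 0] exI[of _ 1]) auto
  have bnd: "\<forall>k. Q k \<longrightarrow> k \<le> n" unfolding Q_def using cdist_less by (auto simp: less_imp_le)
  obtain K where K: "Q K" "\<forall>k. Q k \<longrightarrow> k \<le> K" using Nat.ex_has_greatest_nat[OF Q1 bnd] by blast
  then obtain p q h where pq: "p < n" "q < n" "p \<noteq> q" "cdist n p q = K" "h \<in> H" "h \<subseteq> cint n q p"
    unfolding Q_def by blast
  have "\<forall>f\<in>H. \<not> f \<subseteq> cint n (vsucc n q) p"
  proof (intro ballI notI)
    fix f assume f: "f \<in> H" "f \<subseteq> cint n (vsucc n q) p"
    then have ne: "vsucc n q \<noteq> p" using edge_not_subset_cint_self pq by auto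
    then have "cdist n p (vsucc n q) = K + 1" using cdist_vsucc_right_Suc[of p n q] pq by auto
    then have "Q (K + 1)" unfolding Q_def using pq f ne vsucc_less[of q n]
      by (intro exI[of _ p] exI[of _ "vsucc n q"]) auto
    then show False using K(2) by fastforce
  qed
  moreover have "\<forall>f\<in>H. \<not> f \<subseteq> cint n q (vpred n p)"
  proof (intro ballI notI)
    fix f assume f: "f \<in> H" "f \<subseteq> cint n q (vpred n p)"
    then have ne: "vpred n p \<noteq> q" using edge_not_subset_cint_self pq by auto
    then have "cdist n (vpred n p) q = K + 1" using cdist_vpred_left_Suc[of p n q] pq by auto
    then have "Q (K + 1)" unfolding Q_def using pq f ne vpred_less[of p n]
      by (intro exI[of _ "vpred n p"] exI[of _ q]) auto
    then show False using K(2) by fastforce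
  qed
  ultimately show ?thesis using tight_of_minimal_cint[OF pq(1-3,5,6)] by blast
qed

lemma lam_tight:
  assumes "tight p q"
  shows "lam n H p = q"
proof -
  from assms have pq: "p < n" "q < n" "p \<noteq> q" and ex: "\<exists>h\<in>H. p \<in> h \<and> q \<in> h \<and> h \<subseteq> cint n q p"
    and no2: "\<forall>h\<in>H. \<not> h \<subseteq> cint n (vsucc n q) p" unfolding tight_def by auto
  show ?thesis unfolding lam_def
  proof (rule the_equality)
    show "q < n \<and> (\<exists>h\<in>H. p \<in> h \<and> h \<subseteq> cint n q p) \<and> \<not> (\<exists>h\<in>H. p \<in> h \<and> h \<subseteq> cint n (vsucc n q) p)"
      using pq ex no2 by blast
  next
    fix u assume u: "u < n \<and> (\<exists>h\<in>H. p \<in> h \<and> h \<subseteq> cint n u p) \<and>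
      \<not> (\<exists>h\<in>H. p \<in> h \<and> h \<subseteq> cint n (vsucc n u) p)"
    show "u = q"
    proof (rule ccontr)
      assume "u \<noteq> q"
      then have "cint n u p \<subseteq> cint n (vsucc n q) p \<or> cint n q p \<subseteq> cint n (vsucc n u) p"
        using cint_end_nested[of u n q p] u pq by auto
      then show False
      proof
        assume s: "cint n u p \<subseteq> cint n (vsucc n q) p"
        from u obtain h where "h \<in> H" "h \<subseteq> cint n u p" by blast
        then show False using s no2 by blast
      next
        assume s: "cint n q p \<subseteq> cint n (vsucc n u) p"
        from ex obtain h where "h \<in> H" "p \<in> h" "h \<subseteq> cint n q p" by blast
        then show False using s u by blast
      qed
    qed
  qed
qed

lemma rho_tight:
  assumes "tight p q"
  shows "rho n H q = p"
proof -
  from assms have pq: "p < n" "q < n" "p \<noteq> q" and ex: "\<exists>h\<in>H. p \<in> h \<and> q \<in> h \<and> h \<subseteq> cint n q p"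
    and no1: "\<forall>h\<in>H. \<not> h \<subseteq> cint n q (vpred n p)" unfolding tight_def by auto
  show ?thesis unfolding rho_def
  proof (rule the_equality)
    show "p < n \<and> (\<exists>h\<in>H. q \<in> h \<and> h \<subseteq> cint n q p) \<and> \<not> (\<exists>h\<in>H. q \<in> h \<and> h \<subseteq> cint n q (vpred n p))"
      using pq ex no1 by blast
  next
    fix u assume u: "u < n \<and> (\<exists>h\<in>H. q \<in> h \<and> h \<subseteq> cint n q u) \<and>
      \<not> (\<exists>h\<in>H. q \<in> h \<and> h \<subseteq> cint n q (vpred n u))"
    show "u = p"
    proof (rule ccontr)
      assume "u \<noteq> p"
      then have "cint n q u \<subseteq> cint n q (vpred n p) \<or> cint n q p \<subseteq> cint n q (vpred n u)"
        using cint_start_nested[of u n q p] u pq by auto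
      then show False
      proof
        assume s: "cint n q u \<subseteq> cint n q (vpred n p)"
        from u obtain h where "h \<in> H" "h \<subseteq> cint n q u" by blast
        then show False using s no1 by blast
      next
        assume s: "cint n q p \<subseteq> cint n q (vpred n u)"
        from ex obtain h where "h \<in> H" "q \<in> h" "h \<subseteq> cint n q p" by blast
        then show False using s u by blast
      qed
    qed
  qed
qed

lemma tight_cdist_ge_r:
  assumes "tight p q"
  shows "r \<le> cdist n p q"
proof (rule ccontr)
  from assms have pq: "p < n" "q < n" "p \<noteq> q" and no_left: "\<forall>h\<in>H. \<not> h \<subseteq> cint n q (vpred n p)"
    unfolding tight_def by auto
  assume "\<not> r \<le> cdist n p q"
  moreover have "card (cint n p (vpred n q)) = cdist n p q"
    using card_cint[of p n "vpred n q"] cdist_vpred_right[of p n q] cdist_eq_0_iff[of p n q]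
      pq vpred_less[of q n] by auto
  ultimately obtain f where f: "f \<in> H" "f \<inter> cint n p (vpred n q) = {}"
    using edge_avoiding_short_cint[of p "vpred n q"] pq vpred_less[of q n] by auto
  have "f \<subseteq> cint n q (vpred n p)"
  proof
    fix x assume "x \<in> f"
    then have "x < n" "x \<notin> cint n p (vpred n q)" using f edge_less by auto
    then have "x \<in> cint n (vsucc n (vpred n q)) (vpred n p)"
      using mem_cint_complement[of p n "vpred n q" x] pq vpred_less[of q n] by auto
    then show "x \<in> cint n q (vpred n p)" using vsucc_vpred[of q n] pq by auto
  qed
  then show False using no_left f by blast
qed

lemma tight_r_set_mem_H:
  assumes "tight p q"
    and e: "card e = r" "vsucc n p \<in> e" "q \<in> e" "e \<subseteq> cint n (vsucc n p) q"
  shows "e \<in> H"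
proof (rule mem_H_if_no_edge_within_gap)
  from assms(1) have pq: "p < n" "q < n" "p \<noteq> q"
    and no_right: "\<forall>h\<in>H. \<not> h \<subseteq> cint n (vsucc n q) p"
    unfolding tight_def by auto
  from assms(1) obtain h where h: "h \<in> H" "h \<subseteq> cint n q p" unfolding tight_def by blast
  have Q2: "2 \<le> cdist n p q" using tight_cdist_ge_r[OF assms(1)] r_ge_2 by auto
  define p1 where "p1 = vsucc n p"
  have p1n: "p1 < n" using vsucc_less pq unfolding p1_def by auto
  have bp1: "btw n p p1 q"
    using cdist_vsucc_right[of p n p] pq four_le_n Q2 unfolding p1_def btw_def by auto
  have p1q: "p1 \<noteq> q" using vsucc_neq_if_cdist_ge_2[of p n q] pq Q2 unfolding p1_def by auto
  have h_avoids: "h \<inter> cint n p1 (vpred n q) = {}"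
    using cint_disjoint_of_btw[OF pq(1,2) p1n bp1 h(2)] .
  show "e \<subseteq> {0..<n}" using e(4) by (auto simp: cint_def)
  show "card e = r" by (fact e(1))
  \<comment> \<open>A gap of e lies either in the arc (q, p1), hence in cint (q+1) p, or in the arc (p1, q),
    hence in cint p1 (q-1), which the edge h avoids.\<close>
  fix a b assume ab: "a < n" "b < n" "e \<inter> cint n a b = {}"
  show "\<forall>k\<in>H. \<not> k \<subseteq> cint n a b"
  proof (intro ballI notI)
    fix k assume k: "k \<in> H" "k \<subseteq> cint n a b"
    have out: "q \<notin> cint n a b" "p1 \<notin> cint n a b" using ab e unfolding p1_def by auto
    then have "a \<noteq> q" "a \<noteq> p1" using left_mem_cint ab by auto
    then have "btw n q a p1 \<or> btw n p1 a q" using btw_cases[of q p1 n a] p1q pq p1n ab by auto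
    then show False
    proof
      assume "btw n q a p1"
      then have "k \<subseteq> cint n (vsucc n q) p"
        using cint_subset_cint_vsucc_of_btw[of p n q a b] pq ab Q2 out k unfolding p1_def by blast
      then show False using no_right k by blast
    next
      assume "btw n p1 a q"
      then have "k \<subseteq> cint n p1 (vpred n q)"
        using cint_subset_cint_vpred_of_btw[of p n q a b] pq ab Q2 out k unfolding p1_def by blast
      then show False
        using no_disjoint_edge_pair[of k h p1 "vpred n q"] k h h_avoids p1n vpred_less[of q n] pq
        by auto
    qed
  qed
qed

lemma tight_next_edge:
  assumes "tight p q"
  shows "\<exists>e\<in>H. q \<in> e \<and> e \<subseteq> cint n (vsucc n p) q"
proof -
  from assms have pq: "p < n" "q < n" "p \<noteq> q" unfolding tight_def by auto
  have big: "r \<le> cdist n p q" using tight_cdist_ge_r[OF assms] .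
  then have "vsucc n p \<noteq> q" using vsucc_neq_if_cdist_ge_2[of p n q] pq r_ge_2 by auto
  moreover have "cdist n (vsucc n p) q = cdist n p q - 1"
    using cdist_vsucc_left[of p n q] pq by auto
  ultimately obtain e where e: "card e = r" "vsucc n p \<in> e" "q \<in> e" "e \<subseteq> cint n (vsucc n p) q"
    using subset_cint_with_ends[of "vsucc n p" n q r] vsucc_less[of p n] pq big r_ge_2 by auto
  then show ?thesis using tight_r_set_mem_H[OF assms e] by blast
qed

lemma farthest_edge_start:
  assumes "s < n" "q < n" "s \<noteq> q" "e \<in> H" "q \<in> e" "e \<subseteq> cint n s q"
  shows "\<exists>t g. t < n \<and> t \<noteq> q \<and> cdist n q s \<le> cdist n q t \<and> g \<in> H \<and> q \<in> g \<and> t \<in> g \<and>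
    g \<subseteq> cint n t q \<and> (\<forall>f\<in>H. q \<in> f \<longrightarrow> \<not> f \<subseteq> cint n (vsucc n t) q)"
proof -
  define starts where "starts k \<longleftrightarrow>
    (\<exists>t g. t < n \<and> t \<noteq> q \<and> cdist n q t = k \<and> g \<in> H \<and> q \<in> g \<and> g \<subseteq> cint n t q)" for k
  have s: "starts (cdist n q s)" unfolding starts_def using assms by blast
  have bounded: "\<forall>k. starts k \<longrightarrow> k \<le> n"
    unfolding starts_def using cdist_less[of q n] assms(2) by (auto simp: less_imp_le)
  obtain K where K: "starts K" "\<forall>k. starts k \<longrightarrow> k \<le> K"
    using Nat.ex_has_greatest_nat[of starts, OF s bounded] by blast
  then obtain t g where tg: "t < n" "t \<noteq> q" "cdist n q t = K" "g \<in> H" "q \<in> g" "g \<subseteq> cint n t q"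
    unfolding starts_def by blast
  have farthest: "\<not> f \<subseteq> cint n (vsucc n t) q" if f: "f \<in> H" "q \<in> f" for f
  proof
    assume f_sub: "f \<subseteq> cint n (vsucc n t) q"
    then have ne: "vsucc n t \<noteq> q" using f edge_not_subset_cint_self assms(2) by auto
    then have "cdist n q (vsucc n t) = K + 1"
      using cdist_vsucc_right_Suc[of q n t] assms(2) tg by auto
    then have "starts (K + 1)" unfolding starts_def using f f_sub ne vsucc_less[of t n] tg
      by (intro exI[of _ "vsucc n t"] exI[of _ f]) auto
    then show False using K(2) by fastforce
  qed
  have "t \<in> g"
  proof (rule ccontr)
    assume "t \<notin> g"
    then have "g \<subseteq> cint n (vsucc n t) q"
      using cint_shrink_left[of t n q] tg assms(2) edge_less by blast
    then show False using farthest tg by blast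
  qed
  moreover have "cdist n q s \<le> cdist n q t" using K(2) s tg(3) by blast
  ultimately show ?thesis using tg farthest by blast
qed

lemma tight_pair_continues:
  assumes "tight p q"
  shows "\<exists>t. tight q t \<and> btw n p t q"
proof -
  from assms have pq: "p < n" "q < n" "p \<noteq> q" unfolding tight_def by auto
  from assms obtain h where h: "h \<in> H" "h \<subseteq> cint n q p" unfolding tight_def by blast
  have "2 \<le> cdist n p q" using tight_cdist_ge_r[OF assms] r_ge_2 by auto
  then have p1: "vsucc n p < n" "vsucc n p \<noteq> q"
    using vsucc_less[of p n] vsucc_neq_if_cdist_ge_2[of p n q] pq by auto
  obtain e where "e \<in> H" "q \<in> e" and e_sub: "e \<subseteq> cint n (vsucc n p) q"
    using tight_next_edge[OF assms] by blast
  obtain t g where tg: "t < n" "t \<noteq> q" "cdist n q (vsucc n p) \<le> cdist n q t"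
      "g \<in> H" "q \<in> g" "t \<in> g" "g \<subseteq> cint n t q"
    and farthest: "\<forall>f\<in>H. q \<in> f \<longrightarrow> \<not> f \<subseteq> cint n (vsucc n t) q"
    using farthest_edge_start[OF p1(1) pq(2) p1(2) \<open>e \<in> H\<close> \<open>q \<in> e\<close> e_sub] by blast
  have bt: "btw n p t q" using btw_of_cdist_ge[of p n q t] pq tg p1 by auto
  have h_avoids: "h \<inter> cint n s (vpred n q) = {}" if "btw n p s q" "s < n" for s
    using cint_disjoint_of_btw[OF pq(1,2) that(2,1) h(2)] .
  have no_left: "\<forall>f\<in>H. \<not> f \<subseteq> cint n t (vpred n q)"
    using no_disjoint_edge_pair[OF _ h(1) tg(1) vpred_less[OF pq(2)]] h_avoids[OF bt tg(1)] by blast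
  \<comment> \<open>An edge in cint (t+1) q either contains q, against the choice of t,
    or lies in cint (t+1) (q-1), which h avoids.\<close>
  have no_right: "\<forall>f\<in>H. \<not> f \<subseteq> cint n (vsucc n t) q"
  proof (intro ballI notI)
    fix f assume f: "f \<in> H" "f \<subseteq> cint n (vsucc n t) q"
    have "vsucc n t \<noteq> q" using f edge_not_subset_cint_self pq by auto
    show False
    proof (cases "q \<in> f")
      case True
      then show False using farthest f by blast
    next
      case False
      then have "f \<subseteq> cint n (vsucc n t) (vpred n q)"
        using cint_shrink_right[of "vsucc n t" n q] f vsucc_less[of t n] tg pq by blast
      moreover have "btw n p (vsucc n t) q"
        using btw_vsucc[of p n q t] pq tg bt \<open>vsucc n t \<noteq> q\<close> by auto
      ultimately show False
        using no_disjoint_edge_pair[of f h "vsucc n t" "vpred n q"] h_avoids f h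
          vsucc_less[of t n] vpred_less[of q n] tg pq by auto
    qed
  qed
  have "tight q t" unfolding tight_def using pq tg no_left no_right by blast
  then show ?thesis using bt by blast
qed

lemma tight_orbit_exists: "\<exists>w. \<forall>i. tight (w i) (w (Suc i))"
proof -
  obtain p q where pq: "tight p q" using tight_pair_exists by blast
  have "tight ((lam n H ^^ i) p) ((lam n H ^^ Suc i) p)" for i
  proof (induction i)
    case 0
    then show ?case using pq lam_tight[OF pq] by simp
  next
    case (Suc i)
    obtain t where t: "tight ((lam n H ^^ Suc i) p) t" using tight_pair_continues[OF Suc] by blast
    then show ?case using lam_tight[OF t] by simp
  qed
  then show ?thesis by (intro exI[of _ "\<lambda>i. (lam n H ^^ i) p"]) simp
qed

lemma orbit_btw:
  assumes orbit: "\<And>i. tight (w i) (w (Suc i))"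
  shows "btw n (w i) (w (Suc (Suc i))) (w (Suc i))"
proof -
  obtain t where t: "tight (w (Suc i)) t" "btw n (w i) t (w (Suc i))"
    using tight_pair_continues[OF orbit[of i]] by blast
  have "t = w (Suc (Suc i))" using lam_tight[OF t(1)] lam_tight[OF orbit[of "Suc i"]] by simp
  then show ?thesis using t(2) by simp
qed

lemma orbit_no_btw:
  assumes orbit: "\<And>i. tight (w i) (w (Suc i))"
  shows "\<not> btw n (w i) (w m) (w (Suc (Suc i)))"
proof
  assume "btw n (w i) (w m) (w (Suc (Suc i)))"
  define a where "a = w i"
  define b where "b = w (Suc i)"
  define c where "c = w (Suc (Suc i))"
  define x where "x = w m"
  define y where "y = w (Suc m)"
  have lt: "a < n" "b < n" "c < n" "x < n" "y < n"
    using tight_less[OF orbit] unfolding a_def b_def c_def x_def y_def by auto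
  have acb: "btw n a c b"
    using orbit_btw[where w = w, OF orbit, of i] unfolding a_def b_def c_def by simp
  have axc: "btw n a x c" using \<open>btw n (w i) (w m) (w (Suc (Suc i)))\<close> unfolding a_def x_def c_def .
  obtain ha where ha: "ha \<in> H" "ha \<subseteq> cint n b a"
    using orbit[of i] unfolding tight_def a_def b_def by blast
  obtain hb where hb: "hb \<in> H" "hb \<subseteq> cint n c b"
    using orbit[of "Suc i"] unfolding tight_def b_def c_def by blast
  obtain hx where hx: "hx \<in> H" "hx \<subseteq> cint n y x"
    using orbit[of m] unfolding tight_def x_def y_def by blast
  have no_left: "\<forall>f\<in>H. \<not> f \<subseteq> cint n y (vpred n x)"
    using orbit[of m] unfolding tight_def x_def y_def by blast
  have xy: "0 < cdist n x y"
    using tight_neq[OF orbit[of m]] cdist_eq_0_iff[of x n y] lt unfolding x_def y_def by auto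
  \<comment> \<open>The step from x to y either stops before b, trapping ha, or overshoots b, enclosing hb.\<close>
  show False
  proof (cases "cdist n x y \<le> cdist n x b")
    case True
    have "ha \<subseteq> cint n y (vpred n x)"
      using cint_vpred_of_short_step[OF lt acb axc xy True] ha by blast
    then show False using no_left ha by blast
  next
    case False
    have "z \<notin> cint n c b" if "z \<in> hx" for z
      using not_mem_cint_of_long_step[of a n b c x y z] lt acb axc False hx that edge_less by auto
    then have "hx \<inter> cint n c b = {}" by blast
    then show False using no_disjoint_edge_pair[of hb hx c b] hb hx lt by auto
  qed
qed

lemma orbit_period_odd:
  assumes orbit: "\<And>i. tight (w i) (w (Suc i))"
    and P: "1 < P" "\<And>i. w (i + P) = w i" "inj_on w {..<P}"
  shows "odd P"
proof
  assume "even P"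
  then obtain L where L: "P = 2 * L" by (auto elim: evenE)
  \<comment> \<open>The even-indexed points walk once around to w P = w 0, so they would pass over w 1.\<close>
  have "\<exists>k<L. btw n (w (2 * k)) (w 1) (w (2 * Suc k))"
  proof (rule closed_walk_btw[where j = 0])
    show "\<forall>k\<le>L. w (2 * k) < n" "w 1 < n" using tight_less[OF orbit] by auto
    show "w (2 * L) = w (2 * 0)" using P(2)[of 0] L by simp
    show "0 < L" using L P(1) by auto
    show "w (2 * Suc 0) \<noteq> w (2 * 0)"
      using orbit_btw[where w = w, OF orbit, of 0] by (auto simp: btw_def numeral_2_eq_2)
    show "\<forall>k<L. w 1 \<noteq> w (2 * k)"
    proof (intro allI impI)
      fix k assume "k < L"
      then have "2 * k < P" "1 < P" using L P(1) by auto
      moreover have "1 \<noteq> 2 * k" by presburger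
      ultimately show "w 1 \<noteq> w (2 * k)" using inj_onD[OF P(3), of 1 "2 * k"] by auto
    qed
  qed
  then obtain k where "btw n (w (2 * k)) (w 1) (w (Suc (Suc (2 * k))))" by auto
  then show False using orbit_no_btw[where w = w, OF orbit, of "2 * k" 1] by blast
qed

lemma orbit_cyc_ordered:
  assumes orbit: "\<And>i. tight (w i) (w (Suc i))"
    and P: "odd P" "\<And>i. w (i + P) = w i" "inj_on w {..<P}"
  shows "cyc_ordered (map (\<lambda>k. w (2 * k)) [0..<P])"
proof (rule cyc_ordered_if_no_btw)
  have w_mod: "w (x mod P) = w x" for x using periodic_mod_eq[of w P] P(2) by blast
  show "0 < P" using P(1) by (rule odd_pos)
  show "\<forall>k<P. w (2 * k) < n" using tight_less[OF orbit] by blast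
  show "distinct (map (\<lambda>k. w (2 * k)) [0..<P])"
  proof (subst distinct_map, intro conjI inj_onI)
    fix a b assume ab: "a \<in> set [0..<P]" "b \<in> set [0..<P]" "w (2 * a) = w (2 * b)"
    then have "w ((2 * a) mod P) = w ((2 * b) mod P)" using w_mod by simp
    then have "(2 * a) mod P = (2 * b) mod P" using P(3) \<open>0 < P\<close> by (auto simp: inj_on_def)
    then show "a = b" using odd_double_mod_inj[of P a b] P(1) ab by auto
  qed simp
  show "\<forall>k<P. \<forall>m<P. \<not> btw n (w (2 * k)) (w (2 * m)) (w (2 * (Suc k mod P)))"
  proof (intro allI impI)
    fix k m
    have "w (2 * (Suc k mod P)) = w ((2 * Suc k) mod P)" using w_mod by (metis mod_mult_right_eq)
    then have "w (2 * (Suc k mod P)) = w (Suc (Suc (2 * k)))" using w_mod by simp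
    then show "\<not> btw n (w (2 * k)) (w (2 * m)) (w (2 * (Suc k mod P)))"
      using orbit_no_btw[where w = w, OF orbit, of "2 * k" "2 * m"] by simp
  qed
qed

lemma orbit_odd_period:
  assumes orbit: "\<And>i. tight (w i) (w (Suc i))"
  shows "\<exists>l\<ge>1. (\<forall>i. w (i + (2 * l + 1)) = w i) \<and> inj_on w {..<2 * l + 1}"
proof -
  have "\<exists>P>0. (\<forall>i. w (i + P) = w i) \<and> inj_on w {..<P}"
  proof (rule orbit_periodic)
    show "w (Suc i) = lam n H (w i)" for i using lam_tight[OF orbit[of i]] by simp
    show "rho n H (w (Suc i)) = w i" for i by (rule rho_tight[OF orbit])
    show "finite (range w)" using tight_less[OF orbit] finite_subset[of "range w" "{..<n}"] by blast
  qed
  then obtain P where P: "0 < P" "\<And>i. w (i + P) = w i" "inj_on w {..<P}" by blast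
  have "P \<noteq> 1" using P(2)[of 0] tight_neq[OF orbit[of 0]] by auto
  then have "odd P" using orbit_period_odd[where w = w, OF orbit] P by auto
  then obtain l where "P = 2 * l + 1" by (rule oddE)
  then show ?thesis using \<open>P \<noteq> 1\<close> P by (intro exI[of _ l]) auto
qed

end

theorem lemma3p6:
  fixes n r :: nat and H :: "nat set set"
  assumes "r \<ge> 2" and "n \<ge> 2 * r" and "M1_saturated n r H"
  shows "\<exists>l \<ge> 1. \<exists>w :: nat \<Rightarrow> nat.
     (\<forall>i < 2*l+1. w i < n) \<and> distinct (map w [0..<2*l+1]) \<and>
     cyc_ordered (map (\<lambda>j. w (2*j)) [0..<l+1] @ map (\<lambda>j. w (2*j+1)) [0..<l]) \<and>
     (\<forall>i < 2*l+1. lam n H (w i) = w ((i + 1) mod (2*l+1)) \<and>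
                  rho n H (w i) = w ((i + 2*l) mod (2*l+1)))"
proof -
  interpret M1_saturated_cgh n r H using assms by unfold_locales
  obtain w where orbit: "\<And>i. tight (w i) (w (Suc i))" using tight_orbit_exists by blast
  obtain l where l: "1 \<le> l" and per: "\<And>i. w (i + (2 * l + 1)) = w i"
    and inj: "inj_on w {..<2 * l + 1}"
    using orbit_odd_period[where w = w, OF orbit] by blast
  have w_mod: "w (i mod (2 * l + 1)) = w i" for i
    using periodic_mod_eq[of w "2 * l + 1"] per by blast
  show ?thesis
  proof (intro exI[of _ l] exI[of _ w] conjI allI impI l)
    show "w i < n" for i using tight_less[OF orbit] by blast
    show "distinct (map w [0..<2 * l + 1])"
      using inj by (simp add: distinct_map atLeast0LessThan del: upt_Suc)
    show "cyc_ordered (map (\<lambda>j. w (2 * j)) [0..<l + 1] @ map (\<lambda>j. w (2 * j + 1)) [0..<l])"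
      unfolding map_double_period_odd[of w l, OF per]
      using orbit_cyc_ordered[where w = w, OF orbit _ per inj] by (simp del: upt_Suc)
    show "lam n H (w i) = w ((i + 1) mod (2 * l + 1))" for i
      using lam_tight[OF orbit[of i]] w_mod[of "Suc i"] by simp
    show "rho n H (w i) = w ((i + 2 * l) mod (2 * l + 1))" for i
      using rho_tight[OF orbit[of "i + 2 * l"]] per[of i] w_mod[of "i + 2 * l"] by simp
  qed
qed

end
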